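(* Assume $\mathrm{char}\,K\ne2$, $\prod_{i=1}^{n-1}(1+q^i)=0$, and $\mathcal H(D_n)$ is split over $K$, so that $q$ is a primitive $2\ell$-th root of unity with $1\le\ell<n$. Let $\lambda\in\mathcal P_n$ with $h(\lambda)=\lambda$. Then $n$ is even. Moreover, if $\underline\emptyset\xrightarrow{i_1}\cdot\xrightarrow{i_2}\cdots\xrightarrow{i_n}\lambda$ is a path in Kleshchev's good lattice, then for every $k\in\mathbb Z$, $$\#\{j: i_j\equiv k \bmod 2\ell\}=\#\{j: i_j\equiv k+\ell\bmod 2\ell\}.$$
   Context: $K$ is a field, $q\in K^\times$. $\mathcal H(B_n)$ is the $K$-algebra with generators $T_0,\dots,T_{n-1}$ and relations $T_0^2=1$; $(T_i+1)(T_i-q)=0$ for $1\le i\le n-1$; $T_0T_1T_0T_1=T_1T_0T_1T_0$; $T_iT_{i+1}T_i=T_{i+1}T_iT_{i+1}$ for $1\le i\le n-2$; $T_iT_j=T_jT_i$ for $|i-j|>1$; $\mathcal H(D_n)$ is the subalgebra generated by $T_0T_1T_0,T_1,\dots,T_{n-1}$. For a bipartition $\lambda$ of $n$, $\tilde D^\lambda$ is the simple head of the Dipper–James–Mathas Specht module $\tilde S^\lambda$, and $\mathcal P_n=\{\lambda:\tilde D^\lambda\neq0\}$; when $q$ is a primitive $2\ell$-th root of unity, $\mathcal P_n$ is the set of Kleshchev bipartitions of $n$ with respect to the parameters $(q;1,-1)$. Nodes of bipartitions carry residues in $\mathbb Z/2\ell\mathbb Z$ and "$2\ell$-good nodes"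 are as in Ariki–Mathas for the Ariki–Koike parameters $(q;Q_1=1,Q_2=-1)$. Kleshchev's good lattice is the graph on Kleshchev bipartitions with an arrow $\mu\xrightarrow{x}\lambda$ when $\lambda$ is obtained from $\mu$ by adding a $2\ell$-good node of residue $x$; $\underline\emptyset=(\emptyset,\emptyset)$. Let $\sigma$ be the automorphism of $\mathcal H(B_n)$ with $\sigma(T_0)=-T_0$, $\sigma(T_i)=T_i$ ($i\ne0$); $h$ is the involution of $\mathcal P_n$ with $(\tilde D^\lambda)^\sigma\cong\tilde D^{h(\lambda)}$. Known fact: if $\underline\emptyset\xrightarrow{i_1}\cdots\xrightarrow{i_n}\lambda$ is a path in the good lattice, then $\underline\emptyset\xrightarrow{i_1+\ell}\cdots\xrightarrow{i_n+\ell}h(\lambda)$ is also a path. *)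

theory Defs
  imports Main
begin

text \<open>Nodes of a bipartition: (k, r, c) with component k \<in> {0,1} (0 = first,
  1 = second component), row r and column c, both counted from 0.
  A bipartition is a finite set of such nodes closed under moving up/left
  inside its component (a pair of Young diagrams).\<close>

type_synonym node = "nat \<times> nat \<times> nat"

definition bipartition :: "node set \<Rightarrow> bool" where
  "bipartition Y \<longleftrightarrow> finite Y \<and> (\<forall>(k,r,c)\<in>Y. k < 2) \<and>
     (\<forall>k r c r' c'. (k,r,c) \<in> Y \<longrightarrow> r' \<le> r \<longrightarrow> c' \<le> c \<longrightarrow> (k,r',c') \<in> Y)"

text \<open>Residue in Z/2lZ (represented in [0,2l)) for Ariki--Koike parameters
  (q; Q1 = 1 = q^0, Q2 = -1 = q^l), q a primitive 2l-th root of unity: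
  the node (k,r,c) has residue Q_k q^(c-r), i.e. c - r (+ l if in the second component).\<close>

definition res :: "nat \<Rightarrow> node \<Rightarrow> int" where
  "res l \<gamma> = (case \<gamma> of (k,r,c) \<Rightarrow>
      (int c - int r + (if k = 0 then 0 else int l)) mod (2 * int l))"

definition addable :: "node set \<Rightarrow> node \<Rightarrow> bool" where
  "addable Y \<gamma> \<longleftrightarrow> \<gamma> \<notin> Y \<and> bipartition (insert \<gamma> Y)"

definition removable :: "node set \<Rightarrow> node \<Rightarrow> bool" where
  "removable Y \<gamma> \<longleftrightarrow> \<gamma> \<in> Y \<and> bipartition (Y - {\<gamma>})"

definition below :: "node \<Rightarrow> node \<Rightarrow> bool" where
  "below \<gamma> \<gamma>' \<longleftrightarrow> (case \<gamma> of (k,r,c) \<Rightarrow> case \<gamma>' of (k',r',c') \<Rightarrow>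
      k > k' \<or> (k = k' \<and> r > r'))"

definition normal_node :: "nat \<Rightarrow> node set \<Rightarrow> node \<Rightarrow> bool" where
  "normal_node l Y \<gamma> \<longleftrightarrow> removable Y \<gamma> \<and>
     (\<forall>\<eta>. addable Y \<eta> \<and> res l \<eta> = res l \<gamma> \<and> below \<eta> \<gamma> \<longrightarrow>
        card {\<delta>. addable Y \<delta> \<and> res l \<delta> = res l \<gamma> \<and> below \<eta> \<delta> \<and> below \<delta> \<gamma>}
      < card {\<delta>. removable Y \<delta> \<and> res l \<delta> = res l \<gamma> \<and> below \<eta> \<delta> \<and> below \<delta> \<gamma>})"

definition good_node :: "nat \<Rightarrow> node set \<Rightarrow> node \<Rightarrow> bool" where
  "good_node l Y \<gamma> \<longleftrightarrow> normal_node l Y \<gamma> \<and>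
     \<not> (\<exists>\<gamma>'. normal_node l Y \<gamma>' \<and> res l \<gamma>' = res l \<gamma> \<and> below \<gamma> \<gamma>')"

definition good_arrow :: "nat \<Rightarrow> node set \<Rightarrow> int \<Rightarrow> node set \<Rightarrow> bool" where
  "good_arrow l \<mu> x lam \<longleftrightarrow> bipartition \<mu> \<and>
     (\<exists>\<gamma>. \<gamma> \<notin> \<mu> \<and> lam = insert \<gamma> \<mu> \<and> bipartition lam \<and> good_node l lam \<gamma> \<and>
          res l \<gamma> = x mod (2 * int l))"

definition good_path :: "nat \<Rightarrow> nat \<Rightarrow> (nat \<Rightarrow> int) \<Rightarrow> node set \<Rightarrow> bool" where
  "good_path l n i lam \<longleftrightarrow> (\<exists>\<Lambda> :: nat \<Rightarrow> node set. \<Lambda> 0 = {} \<and> \<Lambda> n = lam \<and>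
      (\<forall>j<n. good_arrow l (\<Lambda> j) (i (Suc j)) (\<Lambda> (Suc j))))"

text \<open>Kleshchev bipartitions of n (for parameters (q;1,-1), q primitive 2l-th root
  of unity): those reachable from the empty bipartition in the good lattice.
  By the context, these form the set P_n.\<close>

definition kleshchev :: "nat \<Rightarrow> nat \<Rightarrow> node set \<Rightarrow> bool" where
  "kleshchev l n lam \<longleftrightarrow> (\<exists>i. good_path l n i lam)"

end

theory Submission
  imports Defs
begin

text \<open>Each arrow of the good lattice adds one node whose residue is the label of the arrow,
  so the residue content of \<open>\<lambda>\<close> (the number of its nodes of each residue) can be read off
  from the labels of any path ending at \<open>\<lambda>\<close>. If \<open>h(\<lambda>) = \<lambda>\<close>, the path with all labels shifted
  by \<open>\<ell>\<close> also ends at \<open>\<lambda>\<close>, hence the labels \<open>\<equiv> k\<close> and the labels \<open>\<equiv> k + \<ell>\<close> are equally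
  many. Pairing the residue classes \<open>r\<close> and \<open>r + \<ell>\<close> modulo \<open>2\<ell>\<close> then shows that \<open>n\<close> is even.\<close>

lemma card_Collect_atLeastAtMost_Suc:
  "card {j \<in> {1..Suc m}. P j} = card {j \<in> {1..m}. P j} + (if P (Suc m) then 1 else 0)"
proof (cases "P (Suc m)")
  case True
  then have "{j \<in> {1..Suc m}. P j} = insert (Suc m) {j \<in> {1..m}. P j}"
    by (auto simp: le_Suc_eq)
  then show ?thesis
    using True by simp
next
  case False
  then have "{j \<in> {1..Suc m}. P j} = {j \<in> {1..m}. P j}"
    by (auto simp: le_Suc_eq)
  then show ?thesis
    using False by simp
qed

lemma good_arrow_residue_count:
  assumes "good_arrow l \<mu> x \<nu>"
  shows "card {\<gamma> \<in> \<nu>. res l \<gamma> = y mod (2 * int l)}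
       = card {\<gamma> \<in> \<mu>. res l \<gamma> = y mod (2 * int l)}
         + (if x mod (2 * int l) = y mod (2 * int l) then 1 else 0)"
proof -
  obtain \<gamma> where \<gamma>: "\<gamma> \<notin> \<mu>" "\<nu> = insert \<gamma> \<mu>" "res l \<gamma> = x mod (2 * int l)"
    and "bipartition \<mu>"
    using assms unfolding good_arrow_def by blast
  then have "finite \<mu>"
    unfolding bipartition_def by blast
  have "{\<delta> \<in> \<nu>. res l \<delta> = y mod (2 * int l)}
      = {\<delta> \<in> \<mu>. res l \<delta> = y mod (2 * int l)} \<union> {\<delta>. \<delta> = \<gamma> \<and> x mod (2 * int l) = y mod (2 * int l)}"
    using \<gamma> by auto
  then show ?thesis
    using \<gamma>(1) \<open>finite \<mu>\<close> by (simp add: card_Un_disjoint)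
qed

lemma good_path_residue_count:
  assumes "good_path l n i \<nu>"
  shows "card {\<gamma> \<in> \<nu>. res l \<gamma> = x mod (2 * int l)}
       = card {j \<in> {1..n}. i j mod (2 * int l) = x mod (2 * int l)}"
proof -
  obtain \<Lambda> where "\<Lambda> 0 = {}" "\<Lambda> n = \<nu>"
    and arrows: "\<forall>j<n. good_arrow l (\<Lambda> j) (i (Suc j)) (\<Lambda> (Suc j))"
    using assms unfolding good_path_def by blast
  have "card {\<gamma> \<in> \<Lambda> m. res l \<gamma> = x mod (2 * int l)}
      = card {j \<in> {1..m}. i j mod (2 * int l) = x mod (2 * int l)}" if "m \<le> n" for m
    using that
  proof (induction m)
    case 0
    show ?case using \<open>\<Lambda> 0 = {}\<close> by simp
  next
    case (Suc m)
    have arrow: "good_arrow l (\<Lambda> m) (i (Suc m)) (\<Lambda> (Suc m))"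
      using arrows Suc.prems by simp
    show ?case
      unfolding card_Collect_atLeastAtMost_Suc good_arrow_residue_count[OF arrow]
      using Suc by simp
  qed
  then show ?thesis
    using \<open>\<Lambda> n = \<nu>\<close> by blast
qed

lemma card_mod_eq_add_right:
  fixes f :: "'b \<Rightarrow> int"
  shows "card {j \<in> A. (f j + c) mod m = (k + c) mod m} = card {j \<in> A. f j mod m = k mod m}"
  by (simp add: mod_eq_dvd_iff)

lemma good_path_shifted_label_count:
  assumes path: "good_path l n i \<nu>" and shifted: "good_path l n (\<lambda>j. i j + int l) \<nu>"
  shows "card {j \<in> {1..n}. i j mod (2 * int l) = k mod (2 * int l)}
       = card {j \<in> {1..n}. i j mod (2 * int l) = (k + int l) mod (2 * int l)}"
proof -
  have "card {j \<in> {1..n}. i j mod (2 * int l) = k mod (2 * int l)}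
      = card {j \<in> {1..n}. (i j + int l) mod (2 * int l) = (k + int l) mod (2 * int l)}"
    by (rule card_mod_eq_add_right[symmetric])
  also have "\<dots> = card {\<gamma> \<in> \<nu>. res l \<gamma> = (k + int l) mod (2 * int l)}"
    using good_path_residue_count[OF shifted] by simp
  also have "\<dots> = card {j \<in> {1..n}. i j mod (2 * int l) = (k + int l) mod (2 * int l)}"
    using good_path_residue_count[OF path] by simp
  finally show ?thesis .
qed

lemma even_card_if_mod_counts_periodic:
  fixes A :: "'b set" and f :: "'b \<Rightarrow> int" and l :: nat
  defines "count \<equiv> \<lambda>k. card {j \<in> A. f j mod (2 * int l) = k mod (2 * int l)}"
  assumes "finite A" and "l > 0"
    and periodic: "\<And>k. count (k + int l) = count k"
  shows "even (card A)"
proof -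
  let ?M = "2 * int l"
  have "(\<lambda>j. f j mod ?M) ` A \<subseteq> {0..<?M}"
    using \<open>l > 0\<close> by auto
  then have "card A = (\<Sum>r\<in>{0..<?M}. card {j \<in> A. f j mod ?M = r})"
    using sum.group[of A "{0..<?M}" "\<lambda>j. f j mod ?M" "\<lambda>_. 1::nat"] \<open>finite A\<close>
    by simp
  also have "\<dots> = (\<Sum>r\<in>{0..<?M}. count r)"
    unfolding count_def by (rule sum.cong) auto
  also have "\<dots> = (\<Sum>r\<in>{0..<int l} \<union> {int l..<?M}. count r)"
    by (rule sum.cong) auto
  also have "\<dots> = (\<Sum>r\<in>{0..<int l}. count r) + (\<Sum>r\<in>{int l..<?M}. count r)"
    by (rule sum.union_disjoint) auto
  also have "(\<Sum>r\<in>{int l..<?M}. count r) = (\<Sum>r\<in>{0..<int l}. count (r + int l))"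
  proof -
    have "{int l..<?M} = (\<lambda>r. r + int l) ` {0..<int l}"
      using image_add_atLeastLessThan'[of "int l" 0 "int l"] by simp
    then show ?thesis
      by (simp only:) (rule sum.reindex_cong[where l = "\<lambda>r. r + int l"], auto simp: inj_on_def)
  qed
  finally have "card A = 2 * (\<Sum>r\<in>{0..<int l}. count r)"
    using periodic by simp
  then show ?thesis
    by simp
qed

theorem lemma3p3:
  fixes q :: "'a::field" and n l :: nat
    and h :: "node set \<Rightarrow> node set" and lam :: "node set"
  assumes char_ne_2: "(2::'a) \<noteq> 0"
    and prod_zero: "(\<Prod>i\<in>{1..n-1}. 1 + q ^ i) = 0"
    and q_prim: "q ^ (2 * l) = 1" "\<forall>m. 0 < m \<and> m < 2 * l \<longrightarrow> q ^ m \<noteq> 1"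
    and l_range: "1 \<le> l" "l < n"
    and h_invol: "\<forall>\<mu>. kleshchev l n \<mu> \<longrightarrow> kleshchev l n (h \<mu>) \<and> h (h \<mu>) = \<mu>"
    and h_path: "\<forall>\<mu> i. good_path l n i \<mu> \<longrightarrow> good_path l n (\<lambda>j. i j + int l) (h \<mu>)"
    and lam: "kleshchev l n lam"
    and fixed: "h lam = lam"
  shows "even n \<and>
    (\<forall>i. good_path l n i lam \<longrightarrow>
       (\<forall>k::int. card {j \<in> {1..n}. i j mod (2 * int l) = k mod (2 * int l)}
               = card {j \<in> {1..n}. i j mod (2 * int l) = (k + int l) mod (2 * int l)}))"
proof -
  have balanced: "card {j \<in> {1..n}. i j mod (2 * int l) = k mod (2 * int l)}
                = card {j \<in> {1..n}. i j mod (2 * int l) = (k + int l) mod (2 * int l)}"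
    if path: "good_path l n i lam" for i k
  proof -
    have "good_path l n (\<lambda>j. i j + int l) (h lam)"
      using h_path path by blast
    then show ?thesis
      unfolding fixed by (rule good_path_shifted_label_count[OF path])
  qed
  obtain i where path: "good_path l n i lam"
    using lam unfolding kleshchev_def by blast
  have "even (card {1..n})"
    using l_range(1)
    by (intro even_card_if_mod_counts_periodic[OF _ _ balanced[OF path, symmetric]]) simp_all
  then have "even n"
    by simp
  with balanced show ?thesis
    by blast
qed

end
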